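(* Let $\Gamma_F\subset\mathbb R^4_{\ge0}$ be the Newton polyhedron of the set $$\{(10,0,0,0),(0,10,0,0),(0,0,10,0),(0,0,0,10),(5,1,0,0),(5,0,1,0),(5,0,0,1),(0,1,1,0),(0,0,1,1)\},$$ and let $\Gamma_G$ be the Newton polyhedron of this set together with $W=(9,0,0,0)$. Then $\Gamma_F\subsetneq\Gamma_G$ and $\nu(\Gamma_F)=\nu(\Gamma_G)$.
   Context: The Newton polyhedron of a finite $\mathbf S\subset\mathbb Z^4_{\ge0}$ is $\mathrm{Conv}\bigcup_{a\in\mathbf S}(a+\mathbb R^4_{\ge0})$. For a convenient Newton polyhedron $\Gamma\subset\mathbb R^n_{\ge0}$, the Newton number is $$\nu(\Gamma)=\sum_{\emptyset\ne J\subseteq\{1..n\}}(-1)^{n-|J|}|J|!\,\mathrm{Vol}_{|J|}(\mathbb R^J_{\ge0}\setminus\Gamma)+(-1)^n,$$ where $\mathbb R^J$ is spanned by $e_j$, $j\in J$. *)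

theory Defs
  imports "HOL-Analysis.Analysis"
begin

definition newton_polyhedron :: "(real^'n) set \<Rightarrow> (real^'n) set" where
  "newton_polyhedron S =
     convex hull (\<Union>a\<in>S. (\<lambda>v. a + v) ` {v. \<forall>i. 0 \<le> v $ i})"

definition zero_ext :: "'n set \<Rightarrow> ('n \<Rightarrow> real) \<Rightarrow> real^'n" where
  "zero_ext J y = (\<chi> i. if i \<in> J then y i else 0)"

text \<open>|J|-dimensional volume of R^J_{>=0} minus Gamma, where R^J is the coordinate
  subspace spanned by e_j, j in J, identified with R^J via the product of
  Lebesgue measures.\<close>
definition vol_compl :: "'n set \<Rightarrow> (real^'n) set \<Rightarrow> real" where
  "vol_compl J \<Gamma> =
     measure (PiM J (\<lambda>_. lborel))
       {y \<in> PiE J (\<lambda>_. UNIV). (\<forall>j\<in>J. 0 \<le> y j) \<and> zero_ext J y \<notin> \<Gamma>}"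

definition newton_number :: "(real^'n::finite) set \<Rightarrow> real" where
  "newton_number \<Gamma> =
     (\<Sum>J\<in>{J. J \<noteq> {}}. (-1) ^ (CARD('n) - card J) * fact (card J) * vol_compl J \<Gamma>)
     + (-1) ^ CARD('n)"

end

theory Submission
  imports Defs
begin

(* Let ell x = x1 + 5 (x2 + x3 + x4). Every point of S_F has ell >= 10 while ell W9 = 9, so W9 is
   a new point of Gamma_G. Conversely, every point of Gamma_G with ell >= 10 already lies in Gamma_F:
   moving from a point of Gamma_F towards W9 one stays in Gamma_F until ell drops to 10, which is
   checked on the generators a + R^4_{>=0} of Gamma_F and propagates to their convex hull. With the
   two supporting hyperplanes of Gamma_G through W9 this shows that Gamma_G minus Gamma_F is the
   region 9 + max (x2 + x4) x3 <= ell x < 10 of the orthant. It meets R^J only if 1 is in J, and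
   integrating out x1 leaves the integral of (1 - max (x2 + x4) x3)_+ over R^K_{>=0}, K = J - {1},
   which is 1, 1/2, 1/3 for K = {2,3}, {3,4}, 1/6 for K = {2,4} and 1/8 for K = {2,3,4}. So the
   Newton numbers differ by -1 + 2! * 3/2 - 3! * (1/3 + 1/3 + 1/6) + 4! * 1/8 = 0. *)

section \<open>Newton polyhedra\<close>

definition nonneg_orthant :: "(real^'n) set" where
  "nonneg_orthant = {v. \<forall>i. 0 \<le> v $ i}"

lemma mem_nonneg_orthant: "v \<in> nonneg_orthant \<longleftrightarrow> (\<forall>i. 0 \<le> v $ i)"
  by (simp add: nonneg_orthant_def)

lemma convex_nonneg_orthant: "convex nonneg_orthant"
  by (auto simp: convex_def mem_nonneg_orthant)

lemma closed_nonneg_orthant: "closed nonneg_orthant"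
  unfolding nonneg_orthant_def
  by (intro closed_Collect_all closed_Collect_le continuous_intros)

lemma zero_mem_nonneg_orthant: "0 \<in> nonneg_orthant"
  by (simp add: mem_nonneg_orthant)

lemma add_mem_nonneg_orthant: "x \<in> nonneg_orthant \<Longrightarrow> y \<in> nonneg_orthant \<Longrightarrow> x + y \<in> nonneg_orthant"
  by (simp add: mem_nonneg_orthant)

lemma scaleR_mem_nonneg_orthant: "x \<in> nonneg_orthant \<Longrightarrow> 0 \<le> c \<Longrightarrow> c *\<^sub>R x \<in> nonneg_orthant"
  by (simp add: mem_nonneg_orthant)

lemma newton_polyhedron_eq: "newton_polyhedron S = convex hull (\<Union>a\<in>S. (+) a ` nonneg_orthant)"
  unfolding newton_polyhedron_def nonneg_orthant_def by simp

lemma convex_newton_polyhedron: "convex (newton_polyhedron S)"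
  unfolding newton_polyhedron_eq by simp

lemma newton_polyhedron_mono: "S \<subseteq> T \<Longrightarrow> newton_polyhedron S \<subseteq> newton_polyhedron T"
  unfolding newton_polyhedron_eq by (rule hull_mono) auto

lemma add_mem_newton_polyhedron:
  "a \<in> S \<Longrightarrow> w \<in> nonneg_orthant \<Longrightarrow> a + w \<in> newton_polyhedron S"
  unfolding newton_polyhedron_eq by (rule hull_inc) force

lemma mem_newton_polyhedron: "a \<in> S \<Longrightarrow> a \<in> newton_polyhedron S"
  using add_mem_newton_polyhedron[OF _ zero_mem_nonneg_orthant] by simp

lemma newton_polyhedron_add_orthant:
  assumes "x \<in> newton_polyhedron S" "w \<in> nonneg_orthant"
  shows "x + w \<in> newton_polyhedron S"
proof -
  let ?U = "\<Union>a\<in>S. (+) a ` nonneg_orthant"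
  have "(+) w ` ?U \<subseteq> ?U"
  proof
    fix z assume "z \<in> (+) w ` ?U"
    then obtain a v where "a \<in> S" "v \<in> nonneg_orthant" "z = w + (a + v)" by auto
    then show "z \<in> ?U" using add_mem_nonneg_orthant[OF assms(2), of v]
      by (auto intro!: bexI[of _ a] image_eqI[of _ _ "w + v"] simp: algebra_simps)
  qed
  then have "convex hull ((+) w ` ?U) \<subseteq> newton_polyhedron S"
    unfolding newton_polyhedron_eq by (rule hull_mono)
  moreover have "w + x \<in> convex hull ((+) w ` ?U)"
    using assms(1) unfolding newton_polyhedron_eq convex_hull_translation by auto
  ultimately have "w + x \<in> newton_polyhedron S" by blast
  then show ?thesis by (simp add: add.commute)
qed

lemma newton_polyhedron_subset_halfspace:
  assumes "\<And>a. a \<in> S \<Longrightarrow> t \<le> c \<bullet> a" "\<And>i. 0 \<le> c $ i"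
  shows "newton_polyhedron S \<subseteq> {x. t \<le> c \<bullet> x}"
  unfolding newton_polyhedron_eq
proof (rule hull_minimal)
  have "0 \<le> c \<bullet> v" if "v \<in> nonneg_orthant" for v
    using that assms(2) unfolding inner_vec_def mem_nonneg_orthant by (auto intro!: sum_nonneg)
  then show "(\<Union>a\<in>S. (+) a ` nonneg_orthant) \<subseteq> {x. t \<le> c \<bullet> x}"
    using assms(1) by (force simp: inner_add_right)
qed (rule convex_halfspace_ge)

lemma newton_polyhedron_eq_sums:
  fixes S :: "(real^'n) set"
  shows "newton_polyhedron S = (\<Union>x\<in>nonneg_orthant. \<Union>y\<in>convex hull S. {x + y})"
proof (rule equalityI)
  show "newton_polyhedron S \<subseteq> (\<Union>x\<in>nonneg_orthant. \<Union>y\<in>convex hull S. {x + y})"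
    unfolding newton_polyhedron_eq
  proof (intro hull_minimal convex_sums convex_nonneg_orthant convex_convex_hull subsetI)
    fix z assume "z \<in> (\<Union>a\<in>S. (+) a ` nonneg_orthant)"
    then obtain a v where "a \<in> S" "v \<in> nonneg_orthant" "z = a + v" by auto
    then show "z \<in> (\<Union>x\<in>nonneg_orthant. \<Union>y\<in>convex hull S. {x + y})"
      by (intro UN_I[OF \<open>v \<in> _\<close>] UN_I[OF hull_inc[OF \<open>a \<in> S\<close>]]) (simp add: add.commute)
  qed
  have "convex hull S \<subseteq> newton_polyhedron S"
    using mem_newton_polyhedron by (intro hull_minimal convex_newton_polyhedron) auto
  then show "(\<Union>x\<in>nonneg_orthant. \<Union>y\<in>convex hull S. {x + y}) \<subseteq> newton_polyhedron S"
    using newton_polyhedron_add_orthant by (fastforce simp: add.commute)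
qed

lemma closed_newton_polyhedron: "finite S \<Longrightarrow> closed (newton_polyhedron S)"
  unfolding newton_polyhedron_eq_sums
  by (intro closed_compact_sums closed_nonneg_orthant compact_convex_hull finite_imp_compact)

lemma newton_polyhedron_insert:
  "newton_polyhedron (insert w S) = convex hull ((+) w ` nonneg_orthant \<union> newton_polyhedron S)"
proof (rule equalityI)
  show "newton_polyhedron (insert w S) \<subseteq> convex hull ((+) w ` nonneg_orthant \<union> newton_polyhedron S)"
    unfolding newton_polyhedron_eq[of "insert w S"]
    by (intro hull_mono) (auto simp: newton_polyhedron_eq intro: hull_inc)
  show "convex hull ((+) w ` nonneg_orthant \<union> newton_polyhedron S) \<subseteq> newton_polyhedron (insert w S)"
    using newton_polyhedron_mono[of S "insert w S"]
    by (intro hull_minimal convex_newton_polyhedron) (auto intro: add_mem_newton_polyhedron)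
qed

lemma convex_combination_3:
  assumes "convex C" "a \<in> C" "b \<in> C" "c \<in> C" "0 \<le> u" "0 \<le> v" "0 \<le> w" "u + v + w = 1"
  shows "u *\<^sub>R a + v *\<^sub>R b + w *\<^sub>R c \<in> C"
proof -
  have "convex hull {a, b, c} \<subseteq> C"
    using assms(1-4) by (intro hull_minimal) auto
  then show ?thesis
    unfolding convex_hull_3 using assms(5-8) by blast
qed

lemma convex_combination_4:
  assumes "convex C" "a \<in> C" "b \<in> C" "c \<in> C" "d \<in> C"
    and "0 \<le> u" "0 \<le> v" "0 \<le> w" "0 \<le> z" "u + v + w + z = 1"
  shows "u *\<^sub>R a + v *\<^sub>R b + w *\<^sub>R c + z *\<^sub>R d \<in> C"
proof (cases "z = 1")
  case True
  then have "u = 0" "v = 0" "w = 0" using assms(6-10) by linarith+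
  then show ?thesis using True assms(5) by simp
next
  case False
  then have s: "0 < 1 - z" "u + v + w = 1 - z" using assms(6-10) by linarith+
  have "(u/(1-z)) *\<^sub>R a + (v/(1-z)) *\<^sub>R b + (w/(1-z)) *\<^sub>R c \<in> C"
    using assms(6-8) s
    by (intro convex_combination_3[OF assms(1-4)]) (simp_all flip: add_divide_distrib)
  then have "(1-z) *\<^sub>R ((u/(1-z)) *\<^sub>R a + (v/(1-z)) *\<^sub>R b + (w/(1-z)) *\<^sub>R c) + z *\<^sub>R d \<in> C"
    using assms(1,5,9) s(1) by (intro convexD) auto
  then show ?thesis using s(1) by (simp add: scaleR_add_right)
qed

text \<open>Parametrising the segment from \<open>p\<close> to \<open>w\<close> by \<open>(p + t w)/(1 + t)\<close> makes the admissible
  range of \<open>t\<close> linear in \<open>p\<close>, so the step of a convex combination can be split among the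
  points proportionally to their excesses \<open>f p - L\<close>.\<close>
lemma convex_segment_toward_point_set:
  fixes \<Gamma> :: "'a::real_vector set" and f :: "'a \<Rightarrow> real"
  assumes "convex \<Gamma>" "linear f" "\<And>p. p \<in> \<Gamma> \<Longrightarrow> L \<le> f p"
  shows "convex {p \<in> \<Gamma>. \<forall>t. 0 \<le> t \<and> t \<le> f p - L \<longrightarrow> (1/(1+t)) *\<^sub>R (p + t *\<^sub>R w) \<in> \<Gamma>}"
    (is "convex {p \<in> \<Gamma>. ?P p}")
proof (rule convexI)
  fix p1 p2 and u v :: real
  assume p1: "p1 \<in> {p \<in> \<Gamma>. ?P p}" and p2: "p2 \<in> {p \<in> \<Gamma>. ?P p}"
    and uv: "0 \<le> u" "0 \<le> v" "u + v = 1"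
  have in\<Gamma>: "u *\<^sub>R p1 + v *\<^sub>R p2 \<in> \<Gamma>" using p1 p2 uv assms(1) by (auto intro: convexD)
  define e1 e2 where "e1 = f p1 - L" and "e2 = f p2 - L"
  have e: "0 \<le> e1" "0 \<le> e2" using p1 p2 assms(3) by (auto simp: e1_def e2_def)
  have "f (u *\<^sub>R p1 + v *\<^sub>R p2) - L = u * f p1 + v * f p2 - (u + v) * L"
    using uv linear_add[OF assms(2)] linear_scale[OF assms(2)] by simp
  then have excess: "f (u *\<^sub>R p1 + v *\<^sub>R p2) - L = u * e1 + v * e2"
    by (simp add: e1_def e2_def algebra_simps)
  have "(1/(1+t)) *\<^sub>R ((u *\<^sub>R p1 + v *\<^sub>R p2) + t *\<^sub>R w) \<in> \<Gamma>"
    if t: "0 \<le> t" "t \<le> u * e1 + v * e2" for t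
  proof (cases "u * e1 + v * e2 = 0")
    case True
    then show ?thesis using t in\<Gamma> by simp
  next
    case False
    define E where "E = u * e1 + v * e2"
    have E: "0 < E" using False e uv unfolding E_def
      by (metis add_nonneg_nonneg less_eq_real_def mult_nonneg_nonneg)
    define t1 t2 where "t1 = t * e1 / E" and "t2 = t * e2 / E"
    have "t / E \<le> 1" using t E by (simp add: E_def)
    then have t12: "0 \<le> t1" "t1 \<le> e1" "0 \<le> t2" "t2 \<le> e2"
      using t e E mult_right_mono[of "t / E" 1 e1] mult_right_mono[of "t / E" 1 e2]
      by (auto simp: t1_def t2_def)
    have "u * t1 + v * t2 = t * E / E"
      by (simp add: t1_def t2_def E_def add_divide_distrib algebra_simps)
    then have split: "u * t1 + v * t2 = t"
      using E by simp
    define y1 y2 where "y1 = (1/(1+t1)) *\<^sub>R (p1 + t1 *\<^sub>R w)" and "y2 = (1/(1+t2)) *\<^sub>R (p2 + t2 *\<^sub>R w)"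
    have y: "y1 \<in> \<Gamma>" "y2 \<in> \<Gamma>" using p1 p2 t12 by (auto simp: y1_def y2_def e1_def e2_def)
    have "u * (1+t1) + v * (1+t2) = 1 + t" using uv split by (simp add: algebra_simps)
    then have "u * (1+t1)/(1+t) + v * (1+t2)/(1+t) = 1" using t by (simp flip: add_divide_distrib)
    then have in_hull: "(u * (1+t1)/(1+t)) *\<^sub>R y1 + (v * (1+t2)/(1+t)) *\<^sub>R y2 \<in> \<Gamma>"
      using uv t12 t by (intro convexD[OF assms(1) y]) simp_all
    have "(1+t1) *\<^sub>R y1 = p1 + t1 *\<^sub>R w" "(1+t2) *\<^sub>R y2 = p2 + t2 *\<^sub>R w"
      using t12 by (simp_all add: y1_def y2_def)
    then have "(u * (1+t1)/(1+t)) *\<^sub>R y1 + (v * (1+t2)/(1+t)) *\<^sub>R y2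
        = (1/(1+t)) *\<^sub>R (u *\<^sub>R (p1 + t1 *\<^sub>R w) + v *\<^sub>R (p2 + t2 *\<^sub>R w))"
      by (metis (no_types, lifting) scaleR_add_right scaleR_scaleR times_divide_eq_left mult_1)
    also have "u *\<^sub>R (p1 + t1 *\<^sub>R w) + v *\<^sub>R (p2 + t2 *\<^sub>R w)
        = (u *\<^sub>R p1 + v *\<^sub>R p2) + t *\<^sub>R w"
      by (simp add: algebra_simps flip: split)
    finally show ?thesis using in_hull by simp
  qed
  then show "u *\<^sub>R p1 + v *\<^sub>R p2 \<in> {p \<in> \<Gamma>. ?P p}" using in\<Gamma> excess by auto
qed

section \<open>The polyhedra \<open>Gamma_F\<close> and \<open>Gamma_G\<close>\<close>

abbreviation A1 :: "real^4" where "A1 \<equiv> vector [10, 0, 0, 0]"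
abbreviation A2 :: "real^4" where "A2 \<equiv> vector [0, 10, 0, 0]"
abbreviation A3 :: "real^4" where "A3 \<equiv> vector [0, 0, 10, 0]"
abbreviation A4 :: "real^4" where "A4 \<equiv> vector [0, 0, 0, 10]"
abbreviation B2 :: "real^4" where "B2 \<equiv> vector [5, 1, 0, 0]"
abbreviation B3 :: "real^4" where "B3 \<equiv> vector [5, 0, 1, 0]"
abbreviation B4 :: "real^4" where "B4 \<equiv> vector [5, 0, 0, 1]"
abbreviation C23 :: "real^4" where "C23 \<equiv> vector [0, 1, 1, 0]"
abbreviation C34 :: "real^4" where "C34 \<equiv> vector [0, 0, 1, 1]"
abbreviation W9 :: "real^4" where "W9 \<equiv> vector [9, 0, 0, 0]"

abbreviation S_F :: "(real^4) set" where "S_F \<equiv> {A1, A2, A3, A4, B2, B3, B4, C23, C34}"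
abbreviation Gamma_F :: "(real^4) set" where "Gamma_F \<equiv> newton_polyhedron S_F"
abbreviation Gamma_G :: "(real^4) set" where "Gamma_G \<equiv> newton_polyhedron (insert W9 S_F)"

lemma vector_4_nth [simp]:
  "(vector [a, b, c, d] :: real^4) $ 1 = a" "(vector [a, b, c, d] :: real^4) $ 2 = b"
  "(vector [a, b, c, d] :: real^4) $ 3 = c" "(vector [a, b, c, d] :: real^4) $ 4 = d"
  unfolding vector_def by simp_all

lemma vec_eq_iff_4: "(x::real^4) = y \<longleftrightarrow> x$1 = y$1 \<and> x$2 = y$2 \<and> x$3 = y$3 \<and> x$4 = y$4"
  by (auto simp: vec_eq_iff forall_4)

lemma mem_nonneg_orthant_4:
  "(x::real^4) \<in> nonneg_orthant \<longleftrightarrow> 0 \<le> x$1 \<and> 0 \<le> x$2 \<and> 0 \<le> x$3 \<and> 0 \<le> x$4"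
  by (auto simp: mem_nonneg_orthant forall_4)

lemma inner_4: "(x::real^4) \<bullet> y = x$1 * y$1 + x$2 * y$2 + x$3 * y$3 + x$4 * y$4"
  by (simp add: inner_vec_def sum_4)

lemma newton_polyhedron_halfspace_4:
  fixes S :: "(real^4) set"
  assumes "\<forall>a\<in>S. t \<le> vector [c1, c2, c3, c4] \<bullet> a" "0 \<le> c1" "0 \<le> c2" "0 \<le> c3" "0 \<le> c4"
    and "x \<in> newton_polyhedron S"
  shows "t \<le> c1 * x$1 + c2 * x$2 + c3 * x$3 + c4 * x$4"
proof -
  have "\<And>i. 0 \<le> (vector [c1, c2, c3, c4] :: real^4) $ i"
    using assms(2-5) exhaust_4 by (metis vector_4_nth)
  then show ?thesis
    using newton_polyhedron_subset_halfspace[of S t "vector [c1, c2, c3, c4]"] assms(1,6)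
    by (auto simp: inner_4)
qed

text \<open>\<open>ell = 10\<close> is the supporting hyperplane of \<open>Gamma_F\<close> violated by \<open>W9\<close>; the two supporting
  hyperplanes of \<open>Gamma_G\<close> through \<open>W9\<close> combine into \<open>9 + excess x \<le> ell x\<close>, and \<open>in_gap\<close>
  describes \<open>Gamma_G - Gamma_F\<close> inside the orthant.\<close>
definition ell :: "real^4 \<Rightarrow> real" where
  "ell x = x$1 + 5 * x$2 + 5 * x$3 + 5 * x$4"

definition excess :: "real^4 \<Rightarrow> real" where
  "excess x = max (x$2 + x$4) (x$3)"

definition in_gap :: "real^4 \<Rightarrow> bool" where
  "in_gap x \<longleftrightarrow> 9 + excess x \<le> ell x \<and> ell x < 10"

lemma linear_ell: "linear ell"
  by (rule linearI) (simp_all add: ell_def algebra_simps)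

lemma ell_nonneg: "x \<in> nonneg_orthant \<Longrightarrow> 0 \<le> ell x"
  by (simp add: ell_def mem_nonneg_orthant_4)

lemma ell_S_F: "a \<in> S_F \<Longrightarrow> ell a = 10 \<or> (ell a = 50 \<and> (a = A2 \<or> a = A3 \<or> a = A4))"
  by (auto simp: ell_def)

lemma ell_Gamma_F: "x \<in> Gamma_F \<Longrightarrow> 10 \<le> ell x"
  using newton_polyhedron_halfspace_4[of S_F 10 1 5 5 5 x] by (simp add: inner_4 ell_def)

lemma excess_Gamma_G: "x \<in> Gamma_G \<Longrightarrow> 9 + excess x \<le> ell x"
proof -
  assume x: "x \<in> Gamma_G"
  have "9 \<le> x$1 + 4 * x$2 + 5 * x$3 + 4 * x$4"
    using newton_polyhedron_halfspace_4[of _ 9 1 4 5 4, OF _ _ _ _ _ x] by (simp add: inner_4)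
  moreover have "9 \<le> x$1 + 5 * x$2 + 4 * x$3 + 5 * x$4"
    using newton_polyhedron_halfspace_4[of _ 9 1 5 4 5, OF _ _ _ _ _ x] by (simp add: inner_4)
  ultimately show ?thesis by (simp add: excess_def ell_def)
qed

lemma S_F_subset_Gamma_F: "a \<in> S_F \<Longrightarrow> a \<in> Gamma_F"
  by (rule mem_newton_polyhedron)

lemma Gamma_F_subset_Gamma_G: "Gamma_F \<subseteq> Gamma_G"
  by (rule newton_polyhedron_mono) auto

lemma Gamma_F_psubset_Gamma_G: "Gamma_F \<subset> Gamma_G"
proof -
  have "W9 \<in> Gamma_G" by (rule mem_newton_polyhedron) simp
  moreover have "W9 \<notin> Gamma_F" using ell_Gamma_F[of W9] by (auto simp: ell_def)
  ultimately show ?thesis using Gamma_F_subset_Gamma_G by blast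
qed

lemma large_coordinate_in_Gamma_F:
  assumes "x \<in> nonneg_orthant" "10 \<le> x$i"
  shows "x \<in> Gamma_F"
proof -
  have "x - 10 *\<^sub>R axis i 1 \<in> nonneg_orthant"
    using assms by (auto simp: mem_nonneg_orthant axis_def)
  moreover have "10 *\<^sub>R axis i 1 \<in> S_F"
    using exhaust_4[of i] by (auto simp: vec_eq_iff_4 axis_def)
  ultimately show ?thesis
    using add_mem_newton_polyhedron[of "10 *\<^sub>R axis i 1" S_F] by force
qed

text \<open>The point \<open>(1/ell v)(v + ell v W9)\<close> is an explicit convex combination of
  \<open>A1, B2, B3, B4\<close>.\<close>
lemma orthant_plus_W9_decompose:
  assumes v: "v \<in> nonneg_orthant" and t: "0 \<le> t" "t \<le> ell v"
  shows "\<exists>X\<in>Gamma_F. \<exists>r\<in>nonneg_orthant. v + t *\<^sub>R W9 = t *\<^sub>R X + r"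
proof (cases "t = 0")
  case True
  then show ?thesis using v S_F_subset_Gamma_F[of A1] by auto
next
  case False
  define R where "R = ell v"
  have R: "0 < R" using t False by (simp add: R_def)
  have vc: "0 \<le> v$1" "0 \<le> v$2" "0 \<le> v$3" "0 \<le> v$4" using v by (auto simp: mem_nonneg_orthant_4)
  define X where "X = ((v$1 + 4 * (v$2 + v$3 + v$4)) / R) *\<^sub>R A1
    + (v$2 / R) *\<^sub>R B2 + (v$3 / R) *\<^sub>R B3 + (v$4 / R) *\<^sub>R B4"
  have "(v$1 + 4 * (v$2 + v$3 + v$4)) / R + v$2 / R + v$3 / R + v$4 / R
      = ((v$1 + 4 * (v$2 + v$3 + v$4)) + v$2 + v$3 + v$4) / R"
    by (simp add: add_divide_distrib)
  also have "(v$1 + 4 * (v$2 + v$3 + v$4)) + v$2 + v$3 + v$4 = R" by (simp add: R_def ell_def)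
  finally have "X \<in> Gamma_F" unfolding X_def
    using R vc by (intro convex_combination_4[OF convex_newton_polyhedron])
      (simp_all add: S_F_subset_Gamma_F)
  moreover have "(1 - t/R) *\<^sub>R v \<in> nonneg_orthant"
    using t R v by (intro scaleR_mem_nonneg_orthant) (auto simp: R_def)
  moreover have "v + t *\<^sub>R W9 = t *\<^sub>R X + (1 - t/R) *\<^sub>R v"
  proof -
    have "R *\<^sub>R X = (v$1 + 4 * (v$2 + v$3 + v$4)) *\<^sub>R A1
        + v$2 *\<^sub>R B2 + v$3 *\<^sub>R B3 + v$4 *\<^sub>R B4"
      using R by (simp add: X_def scaleR_add_right)
    also have "\<dots> = v + R *\<^sub>R W9"
      unfolding vec_eq_iff_4 by (simp add: R_def ell_def)
    finally have "R *\<^sub>R X = v + R *\<^sub>R W9" .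
    moreover have "t *\<^sub>R X = (t/R) *\<^sub>R (R *\<^sub>R X)"
      using R by simp
    ultimately have "t *\<^sub>R X = (t/R) *\<^sub>R (v + R *\<^sub>R W9)"
      by simp
    then show ?thesis
      using R by (simp add: algebra_simps)
  qed
  ultimately show ?thesis by blast
qed

lemma S_F_toward_W9:
  assumes a: "a \<in> S_F" and t: "0 \<le> t" "t \<le> ell a - 10"
  shows "(1/(1+t)) *\<^sub>R (a + t *\<^sub>R W9) \<in> Gamma_F"
proof -
  text \<open>A point of \<open>S_F\<close> on the \<open>x\<^sub>i\<close>-axis sees \<open>W9\<close> through the triangle it spans with
    \<open>A1\<close> and \<open>B\<^sub>i\<close>.\<close>
  have via_A1: "(1/(1+t)) *\<^sub>R (d + t *\<^sub>R W9) \<in> Gamma_F"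
    if "d \<in> S_F" "b \<in> S_F" "t \<le> 40"
      "d + t *\<^sub>R W9 = ((40 - t)/40) *\<^sub>R d + (31*t/40) *\<^sub>R A1 + (t/4) *\<^sub>R b" for d b
  proof -
    let ?s = "1/(1+t)"
    have "?s * ((40 - t)/40) + ?s * (31*t/40) + ?s * (t/4) = ?s * ((40 - t)/40 + 31*t/40 + t/4)"
      by (simp only: distrib_left)
    also have "(40 - t)/40 + 31*t/40 + t/4 = 1 + t" by (simp add: field_simps)
    finally have "?s * ((40 - t)/40) + ?s * (31*t/40) + ?s * (t/4) = 1"
      using t by simp
    then have "(?s * ((40 - t)/40)) *\<^sub>R d + (?s * (31*t/40)) *\<^sub>R A1 + (?s * (t/4)) *\<^sub>R b \<in> Gamma_F"
      using t that(1-3) S_F_subset_Gamma_F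
      by (intro convex_combination_3[OF convex_newton_polyhedron]) simp_all
    then show ?thesis
      unfolding that(4) by (simp only: scaleR_add_right scaleR_scaleR)
  qed
  from ell_S_F[OF a] consider "ell a = 10" | "ell a = 50" "a = A2 \<or> a = A3 \<or> a = A4"
    by blast
  then show ?thesis
  proof cases
    case 1
    then show ?thesis using t S_F_subset_Gamma_F[OF a] by simp
  next
    case 2
    then have "t \<le> 40" using t by simp
    then have "(1/(1+t)) *\<^sub>R (A2 + t *\<^sub>R W9) \<in> Gamma_F"
      "(1/(1+t)) *\<^sub>R (A3 + t *\<^sub>R W9) \<in> Gamma_F" "(1/(1+t)) *\<^sub>R (A4 + t *\<^sub>R W9) \<in> Gamma_F"
      using via_A1[of A2 B2] via_A1[of A3 B3] via_A1[of A4 B4]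
      by (auto simp: vec_eq_iff_4 field_simps)
    with 2 show ?thesis by blast
  qed
qed

lemma generator_toward_W9:
  assumes a: "a \<in> S_F" and v: "v \<in> nonneg_orthant"
    and t: "0 \<le> t" "t \<le> ell (a + v) - 10"
  shows "(1/(1+t)) *\<^sub>R ((a + v) + t *\<^sub>R W9) \<in> Gamma_F"
proof -
  have ell_a: "10 \<le> ell a" using ell_S_F[OF a] by auto
  define ta where "ta = min t (ell a - 10)"
  define tv where "tv = t - ta"
  have ta: "0 \<le> ta" "ta \<le> ell a - 10" using t ell_a by (auto simp: ta_def)
  have tv: "0 \<le> tv" "tv \<le> ell v"
    using t ell_a ell_nonneg[OF v] linear_add[OF linear_ell, of a v]
    by (auto simp: ta_def tv_def min_def)
  define Y where "Y = (1/(1+ta)) *\<^sub>R (a + ta *\<^sub>R W9)"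
  have Y: "Y \<in> Gamma_F" "(1+ta) *\<^sub>R Y = a + ta *\<^sub>R W9"
    using S_F_toward_W9[OF a ta] ta by (simp_all add: Y_def)
  obtain X r where X: "X \<in> Gamma_F" "r \<in> nonneg_orthant" "v + tv *\<^sub>R W9 = tv *\<^sub>R X + r"
    using orthant_plus_W9_decompose[OF v tv] by blast
  have "(1+ta)/(1+t) + tv/(1+t) = 1" using t by (simp add: tv_def flip: add_divide_distrib)
  then have "((1+ta)/(1+t)) *\<^sub>R Y + (tv/(1+t)) *\<^sub>R X \<in> Gamma_F"
    using ta tv t by (intro convexD[OF convex_newton_polyhedron Y(1) X(1)]) simp_all
  moreover have "(1/(1+t)) *\<^sub>R r \<in> nonneg_orthant"
    using t X(2) by (intro scaleR_mem_nonneg_orthant) simp_all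
  ultimately have "((1+ta)/(1+t)) *\<^sub>R Y + (tv/(1+t)) *\<^sub>R X + (1/(1+t)) *\<^sub>R r \<in> Gamma_F"
    by (rule newton_polyhedron_add_orthant)
  moreover have "(a + v) + t *\<^sub>R W9 = (1+ta) *\<^sub>R Y + tv *\<^sub>R X + r"
    by (simp add: Y(2) add.assoc flip: X(3)) (simp add: tv_def algebra_simps)
  ultimately show ?thesis
    by (simp add: scaleR_add_right)
qed

lemma Gamma_F_toward_W9:
  assumes "p \<in> Gamma_F" "0 \<le> t" "t \<le> ell p - 10"
  shows "(1/(1+t)) *\<^sub>R (p + t *\<^sub>R W9) \<in> Gamma_F"
proof -
  define C where "C = {p \<in> Gamma_F. \<forall>t. 0 \<le> t \<and> t \<le> ell p - 10
    \<longrightarrow> (1/(1+t)) *\<^sub>R (p + t *\<^sub>R W9) \<in> Gamma_F}"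
  have "convex hull (\<Union>a\<in>S_F. (+) a ` nonneg_orthant) \<subseteq> C"
  proof (rule hull_minimal)
    show "(\<Union>a\<in>S_F. (+) a ` nonneg_orthant) \<subseteq> C"
    proof
      fix z assume "z \<in> (\<Union>a\<in>S_F. (+) a ` nonneg_orthant)"
      then obtain a v where av: "a \<in> S_F" "v \<in> nonneg_orthant" "z = a + v" by blast
      then show "z \<in> C"
        using add_mem_newton_polyhedron[OF av(1,2)] generator_toward_W9[OF av(1,2)]
        by (simp add: C_def)
    qed
    show "convex C"
      unfolding C_def
      using convex_segment_toward_point_set[OF convex_newton_polyhedron linear_ell ell_Gamma_F] .
  qed
  then show ?thesis
    using assms unfolding C_def newton_polyhedron_eq[of S_F, symmetric] by blast
qed

lemma Gamma_G_level_10_subset_Gamma_F: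
  assumes x: "x \<in> Gamma_G" and ell_x: "10 \<le> ell x"
  shows "x \<in> Gamma_F"
proof -
  have "x \<in> convex hull ((+) W9 ` nonneg_orthant \<union> Gamma_F)"
    using x by (simp add: newton_polyhedron_insert)
  moreover have "(+) W9 ` nonneg_orthant \<noteq> {}" "Gamma_F \<noteq> {}"
    using zero_mem_nonneg_orthant S_F_subset_Gamma_F[of A1] by auto
  ultimately obtain u v s q where uv: "0 \<le> u" "0 \<le> v" "u + v = 1"
    and s: "s \<in> (+) W9 ` nonneg_orthant" and q: "q \<in> Gamma_F" and x_su: "x = u *\<^sub>R s + v *\<^sub>R q"
    by (subst (asm) convex_hull_union_two[OF convex_translation[OF convex_nonneg_orthant] _
        convex_newton_polyhedron]) blast+
  then obtain w where w: "w \<in> nonneg_orthant" and x_eq: "x = u *\<^sub>R (W9 + w) + v *\<^sub>R q"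
    by blast
  have ell_W9: "ell W9 = 9" by (simp add: ell_def)
  show ?thesis
  proof (cases "v = 0")
    case True
    then have x_eq: "x = W9 + w" using uv x_eq by simp
    then have "1 \<le> ell w"
      using ell_x linear_add[OF linear_ell, of W9 w] ell_W9 by simp
    then obtain X r where "X \<in> Gamma_F" "r \<in> nonneg_orthant" "w + W9 = X + r"
      using orthant_plus_W9_decompose[OF w, of 1] by auto
    then show ?thesis
      using x_eq newton_polyhedron_add_orthant by (metis add.commute)
  next
    case False
    define p t where "p = q + (u/v) *\<^sub>R w" and "t = u / v"
    have v: "0 < v" using uv False by simp
    have p: "p \<in> Gamma_F"
      unfolding p_def using v uv w q
      by (intro newton_polyhedron_add_orthant scaleR_mem_nonneg_orthant) simp_all
    have "ell x = 9 * u + v * ell p"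
      using v linear_add[OF linear_ell] linear_scale[OF linear_ell]
      by (simp add: x_eq p_def ell_W9 algebra_simps)
    then have "t \<le> ell p - 10" using ell_x uv v by (simp add: t_def field_simps)
    then have "(1/(1+t)) *\<^sub>R (p + t *\<^sub>R W9) \<in> Gamma_F"
      using Gamma_F_toward_W9[OF p] uv v by (simp add: t_def)
    moreover have "1/(1+t) = v" using v uv by (simp add: t_def field_simps)
    moreover have "v *\<^sub>R (p + t *\<^sub>R W9) = x"
      using v by (simp add: x_eq p_def t_def algebra_simps)
    ultimately show ?thesis by simp
  qed
qed

text \<open>Witness: with \<open>g = excess x\<close>, the point \<open>(1 - g) W9 + g F\<close>, where \<open>F\<close> interpolates
  between \<open>conv {A1, B2, B4}\<close> and \<open>conv {B3, C23, C34}\<close>, agrees with \<open>x\<close> in the last three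
  coordinates and lies below it in the first.\<close>
lemma gap_subset_Gamma_G:
  assumes x: "x \<in> nonneg_orthant" and gap: "in_gap x"
  shows "x \<in> Gamma_G"
proof -
  define g where "g = excess x"
  have xc: "0 \<le> x$1" "0 \<le> x$2" "0 \<le> x$3" "0 \<le> x$4" using x by (auto simp: mem_nonneg_orthant_4)
  have g: "0 \<le> g" "g \<le> 1" using xc gap by (auto simp: g_def excess_def in_gap_def ell_def)
  have W9: "W9 \<in> Gamma_G" by (rule mem_newton_polyhedron) simp
  show ?thesis
  proof (cases "g = 0")
    case True
    then have "x$2 = 0" "x$3 = 0" "x$4 = 0" using xc by (auto simp: g_def excess_def max_def split: if_splits)
    moreover have "9 \<le> x$1" using gap calculation by (simp add: in_gap_def ell_def excess_def)
    ultimately have "x - W9 \<in> nonneg_orthant" by (simp add: mem_nonneg_orthant_4)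
    from newton_polyhedron_add_orthant[OF W9 this] show ?thesis by simp
  next
    case False
    then have g_pos: "0 < g" using g by simp
    define y2 y3 y4 where "y2 = x$2 / g" and "y3 = x$3 / g" and "y4 = x$4 / g"
    have "x$2 + x$4 \<le> g" "x$3 \<le> g" by (simp_all add: g_def excess_def)
    then have y: "0 \<le> y2" "0 \<le> y3" "0 \<le> y4" "y2 + y4 \<le> 1" "y3 \<le> 1"
      using xc g_pos by (simp_all add: y2_def y3_def y4_def flip: add_divide_distrib)
    define P1 P2 where "P1 = (1 - y2 - y4) *\<^sub>R A1 + y2 *\<^sub>R B2 + y4 *\<^sub>R B4"
      and "P2 = (1 - y2 - y4) *\<^sub>R B3 + y2 *\<^sub>R C23 + y4 *\<^sub>R C34"
    have "P1 \<in> Gamma_F" "P2 \<in> Gamma_F" unfolding P1_def P2_def using y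
      by (intro convex_combination_3[OF convex_newton_polyhedron S_F_subset_Gamma_F
          S_F_subset_Gamma_F S_F_subset_Gamma_F]; simp)+
    then have "(1 - y3) *\<^sub>R P1 + y3 *\<^sub>R P2 \<in> Gamma_F"
      using y by (intro convexD[OF convex_newton_polyhedron]) simp_all
    then have Q: "(1 - g) *\<^sub>R W9 + g *\<^sub>R ((1 - y3) *\<^sub>R P1 + y3 *\<^sub>R P2) \<in> Gamma_G"
      (is "?Q \<in> _")
      using g Gamma_F_subset_Gamma_G by (intro convexD[OF convex_newton_polyhedron W9]) auto
    have "?Q$1 = 9 + g - 5 * (x$2 + x$3 + x$4)" "?Q$2 = x$2" "?Q$3 = x$3" "?Q$4 = x$4"
      using g_pos by (simp_all add: P1_def P2_def y2_def y3_def y4_def field_simps)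
    then have "x - ?Q \<in> nonneg_orthant"
      using gap by (simp add: mem_nonneg_orthant_4 in_gap_def ell_def g_def)
    from newton_polyhedron_add_orthant[OF Q this] show ?thesis by simp
  qed
qed

lemma Gamma_G_diff_Gamma_F_iff_gap:
  assumes "x \<in> nonneg_orthant"
  shows "x \<in> Gamma_G \<and> x \<notin> Gamma_F \<longleftrightarrow> in_gap x"
proof
  assume x: "x \<in> Gamma_G \<and> x \<notin> Gamma_F"
  then have "ell x < 10" using Gamma_G_level_10_subset_Gamma_F[of x] by (meson not_le)
  then show "in_gap x" using excess_Gamma_G[of x] x by (simp add: in_gap_def)
next
  assume "in_gap x"
  then show "x \<in> Gamma_G \<and> x \<notin> Gamma_F"
    using gap_subset_Gamma_G[OF assms] ell_Gamma_F[of x] by (auto simp: in_gap_def)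
qed

section \<open>Volumes of coordinate regions\<close>

definition coord_region :: "'n set \<Rightarrow> (real^'n \<Rightarrow> bool) \<Rightarrow> ('n \<Rightarrow> real) set" where
  "coord_region J P = {y \<in> PiE J (\<lambda>_. UNIV). (\<forall>j\<in>J. 0 \<le> y j) \<and> P (zero_ext J y)}"

lemma vol_compl_eq_coord_region:
  "vol_compl J \<Gamma> = measure (PiM J (\<lambda>_. lborel)) (coord_region J (\<lambda>x. x \<notin> \<Gamma>))"
  by (simp add: vol_compl_def coord_region_def)

lemma zero_ext_nth: "zero_ext J y $ i = (if i \<in> J then y i else 0)"
  by (simp add: zero_ext_def)

lemma zero_ext_mem_nonneg_orthant: "\<forall>j\<in>J. 0 \<le> y j \<Longrightarrow> zero_ext J y \<in> nonneg_orthant"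
  by (simp add: mem_nonneg_orthant zero_ext_nth)

lemma measurable_zero_ext:
  fixes J :: "'n::finite set"
  shows "zero_ext J \<in> borel_measurable (PiM J (\<lambda>_. lborel :: real measure))"
proof (subst borel_measurable_euclidean_space, intro ballI)
  fix b :: "real^'n" assume "b \<in> Basis"
  then obtain k where b: "b = axis k 1" by (auto simp: Basis_vec_def)
  have "(\<lambda>y. zero_ext J y \<bullet> b) = (\<lambda>y. if k \<in> J then y k else 0)"
    by (auto simp: b inner_axis zero_ext_nth)
  then show "(\<lambda>y. zero_ext J y \<bullet> b) \<in> borel_measurable (PiM J (\<lambda>_. lborel))"
    by (cases "k \<in> J") (auto intro!: measurable_component_singleton)
qed

lemma sets_coord_region:
  assumes "{x. P x} \<in> sets borel"
  shows "coord_region J P \<in> sets (PiM J (\<lambda>_. lborel :: real measure))"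
proof -
  have "coord_region J P = PiE J (\<lambda>_. {0..}) \<inter> (zero_ext J -` {x. P x} \<inter> space (PiM J (\<lambda>_. lborel)))"
    by (auto simp: coord_region_def space_PiM PiE_def Pi_def)
  also have "\<dots> \<in> sets (PiM J (\<lambda>_. lborel))"
    using assms by (intro sets.Int sets_PiM_I_finite measurable_sets[OF measurable_zero_ext]) auto
  finally show ?thesis .
qed

lemma emeasure_coord_region_finite:
  fixes J :: "'n::finite set"
  assumes "\<And>x. x \<in> nonneg_orthant \<Longrightarrow> P x \<Longrightarrow> \<forall>i. x $ i \<le> c"
  shows "emeasure (PiM J (\<lambda>_. lborel)) (coord_region J P) \<noteq> \<infinity>"
proof -
  interpret product_sigma_finite "\<lambda>_::'n. lborel :: real measure" by standard
  have "coord_region J P \<subseteq> PiE J (\<lambda>_. {0..c})"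
  proof
    fix y assume y: "y \<in> coord_region J P"
    then have "\<forall>i. zero_ext J y $ i \<le> c"
      using assms zero_ext_mem_nonneg_orthant by (auto simp: coord_region_def)
    then have "y j \<le> c" if "j \<in> J" for j
      using that by (metis zero_ext_nth)
    then show "y \<in> PiE J (\<lambda>_. {0..c})"
      using y by (auto simp: coord_region_def zero_ext_nth PiE_def Pi_def split: if_splits)
  qed
  then have "emeasure (PiM J (\<lambda>_. lborel)) (coord_region J P)
      \<le> emeasure (PiM J (\<lambda>_. lborel)) (PiE J (\<lambda>_. {0..c}))"
    by (rule emeasure_mono) auto
  also have "\<dots> = (\<Prod>i\<in>J. emeasure lborel {0..c})"
    by (rule emeasure_PiM) auto
  also have "\<dots> < \<infinity>"
    by (simp add: emeasure_lborel_Icc_eq prod_constant power_eq_top_ennreal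
        top.not_eq_extremum[symmetric])
  finally show ?thesis by simp
qed

lemma vol_compl_diff:
  assumes "closed \<Gamma>1" "closed \<Gamma>2" "\<Gamma>1 \<subseteq> \<Gamma>2"
    and "emeasure (PiM J (\<lambda>_. lborel)) (coord_region J (\<lambda>x. x \<notin> \<Gamma>1)) \<noteq> \<infinity>"
  shows "vol_compl J \<Gamma>1 - vol_compl J \<Gamma>2
    = measure (PiM J (\<lambda>_. lborel)) (coord_region J (\<lambda>x. x \<in> \<Gamma>2 \<and> x \<notin> \<Gamma>1))"
proof -
  have "coord_region J (\<lambda>x. x \<in> \<Gamma>2 \<and> x \<notin> \<Gamma>1)
      = coord_region J (\<lambda>x. x \<notin> \<Gamma>1) - coord_region J (\<lambda>x. x \<notin> \<Gamma>2)"
    by (auto simp: coord_region_def)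
  moreover have "coord_region J (\<lambda>x. x \<notin> \<Gamma>2) \<subseteq> coord_region J (\<lambda>x. x \<notin> \<Gamma>1)"
    using assms(3) by (auto simp: coord_region_def)
  moreover have "coord_region J (\<lambda>x. x \<notin> \<Gamma>) \<in> sets (PiM J (\<lambda>_. lborel))" if "closed \<Gamma>" for \<Gamma>
    using that by (intro sets_coord_region) (auto intro: borel_open simp: Compl_eq[symmetric])
  ultimately show ?thesis
    unfolding vol_compl_eq_coord_region using assms(1,2,4) by (simp add: measure_Diff)
qed

lemma nn_integral_PiM_insert_lborel:
  fixes F :: "('i \<Rightarrow> real) \<Rightarrow> ennreal"
  assumes "finite I" "a \<notin> I" "F \<in> borel_measurable (PiM (insert a I) (\<lambda>_. lborel))"
    and "\<And>y. y \<in> space (PiM I (\<lambda>_. lborel)) \<Longrightarrow> (\<integral>\<^sup>+t. F (y(a := t)) \<partial>lborel) = G y"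
  shows "integral\<^sup>N (PiM (insert a I) (\<lambda>_. lborel)) F = integral\<^sup>N (PiM I (\<lambda>_. lborel)) G"
proof -
  interpret product_sigma_finite "\<lambda>_::'i. lborel :: real measure" by standard
  show ?thesis
    unfolding product_nn_integral_insert[OF assms(1-3)] using assms(4) by (rule nn_integral_cong)
qed

lemma nn_integral_PiM_singleton_lborel:
  fixes f :: "real \<Rightarrow> ennreal"
  assumes "f \<in> borel_measurable lborel"
  shows "(\<integral>\<^sup>+y. f (y i) \<partial>PiM {i} (\<lambda>_. lborel)) = (\<integral>\<^sup>+t. f t \<partial>lborel)"
proof -
  interpret product_sigma_finite "\<lambda>_::'i. lborel :: real measure" by standard
  show ?thesis using assms by (rule product_nn_integral_singleton)
qed

lemma nn_integral_indicator_nonneg_cmult: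
  "(0 \<le> b \<Longrightarrow> (\<integral>\<^sup>+t. f t \<partial>M) = c) \<Longrightarrow> (\<integral>\<^sup>+t. indicator {0..} b * f t \<partial>M) = indicator {0..} b * c"
  by (cases "0 \<le> b") (auto simp: indicator_def)

lemma nn_integral_nonneg_one_minus_add:
  assumes "0 \<le> b"
  shows "(\<integral>\<^sup>+t. indicator {0..} t * ennreal (1 - (t + b)) \<partial>lborel) = ennreal ((max 0 (1 - b))^2 / 2)"
proof (cases "b \<le> 1")
  case True
  have "(\<integral>\<^sup>+t. indicator {0..} t * ennreal (1 - (t + b)) \<partial>lborel)
      = (\<integral>\<^sup>+t. ennreal (1 - b - t) * indicator {0..1-b} t \<partial>lborel)"
    by (intro nn_integral_cong) (auto simp: indicator_def ennreal_neg algebra_simps)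
  also have "\<dots> = ennreal ((-((1 - b - (1 - b))^2 / 2)) - (-((1 - b - 0)^2 / 2)))"
    using True by (intro nn_integral_FTC_Icc[where F = "\<lambda>t. -((1 - b - t)^2 / 2)"])
      (auto intro!: derivative_eq_intros simp: field_simps)
  finally show ?thesis using True by (simp add: max_def)
next
  case False
  then have "(\<integral>\<^sup>+t. indicator {0..} t * ennreal (1 - (t + b)) \<partial>lborel) = (\<integral>\<^sup>+t. 0 \<partial>(lborel :: real measure))"
    by (intro nn_integral_cong) (auto simp: indicator_def ennreal_neg)
  then show ?thesis using False by (simp add: max_def)
qed

lemma nn_integral_nonneg_one_minus_max:
  assumes b: "0 \<le> b"
  shows "(\<integral>\<^sup>+t. indicator {0..} t * ennreal (1 - max b t) \<partial>lborel) = ennreal ((1 - b^2) / 2)"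
proof (cases "b \<le> 1")
  case True
  have "(\<integral>\<^sup>+t. indicator {0..} t * ennreal (1 - max b t) \<partial>lborel)
      = (\<integral>\<^sup>+t. ennreal (1 - b) * indicator {0..<b} t \<partial>lborel)
        + (\<integral>\<^sup>+t. ennreal (1 - t) * indicator {b..1} t \<partial>lborel)"
    using b by (subst nn_integral_add[symmetric])
      (auto intro!: nn_integral_cong simp: indicator_def ennreal_neg max_def)
  also have "(\<integral>\<^sup>+t. ennreal (1 - t) * indicator {b..1} t \<partial>lborel) = ennreal ((1 - 1^2/2) - (b - b^2/2))"
    using True by (intro nn_integral_FTC_Icc[where F = "\<lambda>t. t - t^2/2"]) (auto intro!: derivative_eq_intros)
  also have "(1 - 1^2/2) - (b - b^2/2) = (1 - b)^2 / 2"
    by (simp add: power2_eq_square field_simps)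
  also have "(\<integral>\<^sup>+t. ennreal (1 - b) * indicator {0..<b} t \<partial>lborel) = ennreal ((1 - b) * b)"
    using True b by (simp add: nn_integral_cmult_indicator ennreal_mult)
  also have "ennreal ((1 - b) * b) + ennreal ((1 - b)^2 / 2) = ennreal ((1 - b) * b + (1 - b)^2 / 2)"
    using True b by (simp add: ennreal_plus)
  also have "(1 - b) * b + (1 - b)^2 / 2 = (1 - b^2) / 2"
    by (simp add: power2_eq_square field_simps)
  finally show ?thesis .
next
  case False
  then have "1 - b^2 \<le> 0" using b by (simp add: one_le_power)
  then show ?thesis
    using False by (simp add: indicator_def ennreal_neg max_def)
qed

lemma nn_integral_nonneg_one_minus_add_square:
  assumes b: "0 \<le> b"
  shows "(\<integral>\<^sup>+t. indicator {0..} t * ennreal ((1 - (t + b)^2) / 2) \<partial>lborel)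
    = ennreal (if b \<le> 1 then (1 - b)^2 * (2 + b) / 6 else 0)"
proof -
  have nonpos: "(1 - (t + b)^2) / 2 \<le> 0" if "1 \<le> t + b" for t
    using that by (simp add: one_le_power)
  show ?thesis
  proof (cases "b \<le> 1")
    case True
    have "(\<integral>\<^sup>+t. indicator {0..} t * ennreal ((1 - (t + b)^2) / 2) \<partial>lborel)
        = (\<integral>\<^sup>+t. ennreal ((1 - (t + b)^2) / 2) * indicator {0..1 - b} t \<partial>lborel)"
      using nonpos by (intro nn_integral_cong) (auto simp: indicator_def ennreal_neg)
    also have "\<dots> = ennreal ((((1 - b) + b) - ((1 - b) + b)^3/3)/2 - ((0 + b) - (0 + b)^3/3)/2)"
    proof (intro nn_integral_FTC_Icc[where F = "\<lambda>t. ((t + b) - (t + b)^3/3)/2"])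
      show "DERIV (\<lambda>t. ((t + b) - (t + b)^3/3)/2) t :> (1 - (t + b)^2) / 2" for t
        by (auto intro!: derivative_eq_intros simp: field_simps power2_eq_square)
      show "0 \<le> (1 - (t + b)^2) / 2" if "t \<in> {0..1 - b}" for t
      proof -
        have "(t + b)^2 \<le> 1^2" using that b by (intro power_mono) auto
        then show ?thesis by simp
      qed
    qed (use True in auto)
    also have "((1 - b) + b - ((1 - b) + b)^3/3)/2 - ((0 + b) - (0 + b)^3/3)/2
        = (1 - b)^2 * (2 + b) / 6"
      by (simp add: field_simps power2_eq_square power3_eq_cube)
    finally show ?thesis using True by simp
  next
    case False
    then have "(\<integral>\<^sup>+t. indicator {0..} t * ennreal ((1 - (t + b)^2) / 2) \<partial>lborel)
        = (\<integral>\<^sup>+t. 0 \<partial>(lborel :: real measure))"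
      using nonpos by (intro nn_integral_cong) (auto simp: indicator_def ennreal_neg)
    then show ?thesis using False by simp
  qed
qed

lemma nn_integral_nonneg_half_square_one_minus:
  "(\<integral>\<^sup>+t. indicator {0..} t * ennreal ((max 0 (1 - t))^2 / 2) \<partial>lborel) = ennreal (1/6)"
proof -
  have "(\<integral>\<^sup>+t. indicator {0..} t * ennreal ((max 0 (1 - t))^2 / 2) \<partial>lborel)
      = (\<integral>\<^sup>+t. ennreal ((1 - t)^2 / 2) * indicator {0..1} t \<partial>lborel)"
    by (intro nn_integral_cong) (auto simp: indicator_def max_def)
  also have "\<dots> = ennreal (-((1 - 1)^3 / 6) - (-((1 - 0)^3 / 6)))"
  proof (intro nn_integral_FTC_Icc[where F = "\<lambda>t. -((1 - t)^3 / 6)"])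
    show "DERIV (\<lambda>t. -((1 - t)^3 / 6)) t :> (1 - t)^2 / 2" for t :: real
      by (auto intro!: derivative_eq_intros simp: field_simps power2_eq_square)
  qed auto
  finally show ?thesis by simp
qed

lemma nn_integral_nonneg_cubic:
  "(\<integral>\<^sup>+t. indicator {0..} t * ennreal (if t \<le> 1 then (1 - t)^2 * (2 + t) / 6 else 0) \<partial>lborel)
    = ennreal (1/8)"
proof -
  have "(\<integral>\<^sup>+t. indicator {0..} t * ennreal (if t \<le> 1 then (1 - t)^2 * (2 + t) / 6 else 0) \<partial>lborel)
      = (\<integral>\<^sup>+t. ennreal ((1 - t)^2 * (2 + t) / 6) * indicator {0..1} t \<partial>lborel)"
    by (intro nn_integral_cong) (auto simp: indicator_def)
  also have "\<dots> = ennreal ((2 * 1 - 3 * 1^2 / 2 + 1^4 / 4) / 6 - (2 * 0 - 3 * 0^2 / 2 + 0^4 / 4) / 6)"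
  proof (intro nn_integral_FTC_Icc[where F = "\<lambda>t. (2 * t - 3 * t^2 / 2 + t^4 / 4) / 6"])
    show "DERIV (\<lambda>t. (2 * t - 3 * t^2 / 2 + t^4 / 4) / 6) t :> (1 - t)^2 * (2 + t) / 6" for t :: real
      by (auto intro!: derivative_eq_intros simp: field_simps power2_eq_square power3_eq_cube)
  qed auto
  finally show ?thesis by simp
qed

section \<open>The volume of \<open>Gamma_G - Gamma_F\<close>\<close>

lemma vol_compl_Gamma_F_minus_Gamma_G:
  "vol_compl J Gamma_F - vol_compl J Gamma_G = measure (PiM J (\<lambda>_. lborel)) (coord_region J in_gap)"
proof -
  have "coord_region J (\<lambda>x. x \<in> Gamma_G \<and> x \<notin> Gamma_F) = coord_region J in_gap"
    using Gamma_G_diff_Gamma_F_iff_gap[OF zero_ext_mem_nonneg_orthant] by (auto simp: coord_region_def)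
  moreover have "emeasure (PiM J (\<lambda>_. lborel)) (coord_region J (\<lambda>x. x \<notin> Gamma_F)) \<noteq> \<infinity>"
    using large_coordinate_in_Gamma_F linorder_le_cases
    by (intro emeasure_coord_region_finite[of _ 10]) blast
  ultimately show ?thesis
    using Gamma_F_subset_Gamma_G by (simp add: vol_compl_diff closed_newton_polyhedron)
qed

lemma sum_le_twice_excess:
  "0 \<le> x$2 \<Longrightarrow> 0 \<le> x$3 \<Longrightarrow> 0 \<le> x$4 \<Longrightarrow> x$2 + x$3 + x$4 \<le> 2 * excess x"
  by (auto simp: excess_def max_def)

lemma coord_region_gap_empty:
  assumes "1 \<notin> J"
  shows "coord_region J in_gap = {}"
proof -
  have False if "y \<in> coord_region J in_gap" for y
  proof -
    let ?x = "zero_ext J y"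
    have "?x \<in> nonneg_orthant" "in_gap ?x" "?x$1 = 0"
      using that assms zero_ext_mem_nonneg_orthant by (auto simp: coord_region_def zero_ext_nth)
    then show False
      using sum_le_twice_excess[of ?x] by (auto simp: mem_nonneg_orthant_4 in_gap_def ell_def)
  qed
  then show ?thesis by blast
qed

lemma mem_coord_region_insert_gap:
  assumes K: "1 \<notin> K" and y: "y \<in> PiE K (\<lambda>_. UNIV)"
  defines "s \<equiv> zero_ext K y $ 2 + zero_ext K y $ 3 + zero_ext K y $ 4"
  shows "y(1 := t) \<in> coord_region (insert 1 K) in_gap \<longleftrightarrow>
    (\<forall>j\<in>K. 0 \<le> y j) \<and> t \<in> {9 + excess (zero_ext K y) - 5 * s ..< 10 - 5 * s}"
proof -
  let ?x = "zero_ext (insert 1 K) (y(1 := t))"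
  have coord_1: "?x$1 = t" by (simp add: zero_ext_nth)
  have coords: "?x$i = zero_ext K y $ i" if "i \<noteq> 1" for i
    using K that by (auto simp: zero_ext_nth)
  have "(2::4) \<noteq> 1" "(3::4) \<noteq> 1" "(4::4) \<noteq> 1" by simp_all
  then have gap_iff: "in_gap ?x \<longleftrightarrow> 9 + excess (zero_ext K y) \<le> t + 5 * s \<and> t + 5 * s < 10"
    by (simp add: in_gap_def ell_def excess_def coord_1 coords s_def algebra_simps)
  have "0 \<le> t" if "\<forall>j\<in>K. 0 \<le> y j" "9 + excess (zero_ext K y) \<le> t + 5 * s" "t + 5 * s < 10"
  proof -
    have "0 \<le> zero_ext K y $ i" for i using that(1) by (simp add: zero_ext_nth)
    then have "s \<le> 2 * excess (zero_ext K y)" unfolding s_def by (intro sum_le_twice_excess)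
    then show ?thesis using that(2,3) by linarith
  qed
  moreover have "y(1 := t) \<in> PiE (insert 1 K) (\<lambda>_. UNIV)"
    using y K by (auto simp: PiE_def extensional_def)
  ultimately show ?thesis
    using K by (auto simp: coord_region_def gap_iff)
qed

text \<open>Since \<open>ennreal\<close> maps negative reals to \<open>0\<close>, the integrand is \<open>(1 - excess)\<^sub>+\<close>.\<close>
definition gap_integral :: "4 set \<Rightarrow> ennreal" where
  "gap_integral K = (\<integral>\<^sup>+y. indicator {y. \<forall>j\<in>K. 0 \<le> y j} y * ennreal (1 - excess (zero_ext K y))
    \<partial>PiM K (\<lambda>_. lborel))"

lemma sets_in_gap: "{x. in_gap x} \<in> sets borel"
proof -
  have "{x. in_gap x} = {x. 9 + excess x \<le> ell x} \<inter> {x. ell x < 10}"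
    by (auto simp: in_gap_def)
  moreover have "closed {x. 9 + excess x \<le> ell x}"
    unfolding excess_def ell_def by (intro closed_Collect_le continuous_intros)
  moreover have "open {x. ell x < 10}"
    unfolding ell_def by (intro open_Collect_less continuous_intros)
  ultimately show ?thesis by (auto intro: borel_closed borel_open)
qed

lemma emeasure_coord_region_insert_gap:
  assumes K: "1 \<notin> K"
  shows "emeasure (PiM (insert 1 K) (\<lambda>_. lborel)) (coord_region (insert 1 K) in_gap) = gap_integral K"
proof -
  interpret product_sigma_finite "\<lambda>_::4. lborel :: real measure" by standard
  define s g where "s y = zero_ext K y $ 2 + zero_ext K y $ 3 + zero_ext K y $ 4"
    and "g y = excess (zero_ext K y)" for y
  have sets: "coord_region (insert 1 K) in_gap \<in> sets (PiM (insert 1 K) (\<lambda>_. lborel))"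
    by (rule sets_coord_region[OF sets_in_gap])
  have "emeasure (PiM (insert 1 K) (\<lambda>_. lborel)) (coord_region (insert 1 K) in_gap)
      = (\<integral>\<^sup>+y. \<integral>\<^sup>+t. indicator (coord_region (insert 1 K) in_gap) (y(1 := t)) \<partial>lborel \<partial>PiM K (\<lambda>_. lborel))"
    using sets K by (simp add: product_nn_integral_insert flip: nn_integral_indicator)
  also have "\<dots> = (\<integral>\<^sup>+y. \<integral>\<^sup>+t. indicator {y. \<forall>j\<in>K. 0 \<le> y j} y
      * indicator {9 + g y - 5 * s y ..< 10 - 5 * s y} t \<partial>lborel \<partial>PiM K (\<lambda>_. lborel))"
    using mem_coord_region_insert_gap[OF K]
    by (intro nn_integral_cong) (auto simp: space_PiM s_def g_def split: split_indicator)
  also have "\<dots> = gap_integral K"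
    unfolding gap_integral_def
  proof (intro nn_integral_cong)
    fix y
    have "emeasure lborel {9 + g y - 5 * s y ..< 10 - 5 * s y} = ennreal (1 - g y)"
      by (cases "g y \<le> 1") (simp_all add: algebra_simps ennreal_neg)
    then show "(\<integral>\<^sup>+t. indicator {y. \<forall>j\<in>K. 0 \<le> y j} y
        * indicator {9 + g y - 5 * s y ..< 10 - 5 * s y} t \<partial>lborel)
        = indicator {y. \<forall>j\<in>K. 0 \<le> y j} y * ennreal (1 - excess (zero_ext K y))"
      by (simp add: nn_integral_cmult_indicator g_def)
  qed
  finally show ?thesis .
qed

lemma measure_coord_region_insert_gap:
  "1 \<notin> K \<Longrightarrow> gap_integral K = ennreal v \<Longrightarrow> 0 \<le> v
    \<Longrightarrow> measure (PiM (insert 1 K) (\<lambda>_. lborel)) (coord_region (insert 1 K) in_gap) = v"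
  by (simp add: measure_def emeasure_coord_region_insert_gap)

lemma gap_integral_empty: "gap_integral {} = 1"
proof -
  interpret product_sigma_finite "\<lambda>_::4. lborel :: real measure" by standard
  show ?thesis
    unfolding gap_integral_def by (subst nn_integral_empty) (auto simp: excess_def zero_ext_nth)
qed

lemma gap_integral_singleton:
  assumes "i \<in> {2, 3, 4}"
  shows "gap_integral {i} = ennreal (1/2)"
proof -
  have "gap_integral {i} = (\<integral>\<^sup>+y. indicator {0..} (y i) * ennreal (1 - (y i + 0)) \<partial>PiM {i} (\<lambda>_. lborel))"
    unfolding gap_integral_def using assms
    by (intro nn_integral_cong) (auto simp: excess_def zero_ext_nth indicator_def max_def)
  also have "\<dots> = (\<integral>\<^sup>+t. indicator {0..} t * ennreal (1 - (t + 0)) \<partial>lborel)"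
    by (rule nn_integral_PiM_singleton_lborel[of "\<lambda>t. indicator {0..} t * ennreal (1 - (t + 0))"]) simp
  also have "\<dots> = ennreal (1/2)"
    by (subst nn_integral_nonneg_one_minus_add) simp_all
  finally show ?thesis .
qed

lemma gap_integral_3_and:
  assumes a: "a \<in> {2, 4}"
  shows "gap_integral {3, a} = ennreal (1/3)"
proof -
  have a3: "a \<noteq> 3" using a by auto
  have "gap_integral {3, a} = (\<integral>\<^sup>+y. indicator {0..} (y a) * (indicator {0..} (y 3)
      * ennreal (1 - max (y a) (y 3))) \<partial>PiM (insert 3 {a}) (\<lambda>_. lborel))"
    unfolding gap_integral_def using a
    by (intro nn_integral_cong) (auto simp: excess_def zero_ext_nth indicator_def max_def)
  also have "\<dots> = (\<integral>\<^sup>+y. indicator {0..} (y a) * ennreal ((1 - (y a + 0)^2) / 2) \<partial>PiM {a} (\<lambda>_. lborel))"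
  proof (rule nn_integral_PiM_insert_lborel, goal_cases)
    case 3
    show ?case by measurable
  next
    case (4 y)
    show ?case
      using a3 by (simp, intro nn_integral_indicator_nonneg_cmult)
        (simp add: nn_integral_nonneg_one_minus_max)
  qed (use a3 in auto)
  also have "\<dots> = (\<integral>\<^sup>+t. indicator {0..} t * ennreal ((1 - (t + 0)^2) / 2) \<partial>lborel)"
    by (rule nn_integral_PiM_singleton_lborel[of "\<lambda>t. indicator {0..} t * ennreal ((1 - (t + 0)^2) / 2)"])
      simp
  also have "\<dots> = ennreal (1/3)"
    by (subst nn_integral_nonneg_one_minus_add_square) simp_all
  finally show ?thesis .
qed

lemma gap_integral_2_4: "gap_integral {2, 4} = ennreal (1/6)"
proof -
  have "gap_integral {2, 4} = (\<integral>\<^sup>+y. indicator {0..} (y 4) * (indicator {0..} (y 2)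
      * ennreal (1 - (y 2 + y 4))) \<partial>PiM (insert 2 {4::4}) (\<lambda>_. lborel))"
    unfolding gap_integral_def
    by (intro nn_integral_cong) (auto simp: excess_def zero_ext_nth indicator_def max_def)
  also have "\<dots> = (\<integral>\<^sup>+y. indicator {0..} (y 4) * ennreal ((max 0 (1 - y 4))^2 / 2) \<partial>PiM {4::4} (\<lambda>_. lborel))"
  proof (rule nn_integral_PiM_insert_lborel, goal_cases)
    case 3
    show ?case by measurable
  next
    case (4 y)
    show ?case
      by (simp, intro nn_integral_indicator_nonneg_cmult) (simp add: nn_integral_nonneg_one_minus_add)
  qed auto
  also have "\<dots> = (\<integral>\<^sup>+t. indicator {0..} t * ennreal ((max 0 (1 - t))^2 / 2) \<partial>lborel)"
    by (rule nn_integral_PiM_singleton_lborel[of "\<lambda>t. indicator {0..} t * ennreal ((max 0 (1 - t))^2 / 2)"])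
      simp
  also have "\<dots> = ennreal (1/6)"
    by (rule nn_integral_nonneg_half_square_one_minus)
  finally show ?thesis .
qed

lemma gap_integral_2_3_4: "gap_integral {2, 3, 4} = ennreal (1/8)"
proof -
  have "gap_integral {2, 3, 4} = (\<integral>\<^sup>+y. indicator {0..} (y 4) * (indicator {0..} (y 2)
      * (indicator {0..} (y 3) * ennreal (1 - max (y 2 + y 4) (y 3)))) \<partial>PiM (insert 3 {2, 4::4}) (\<lambda>_. lborel))"
    unfolding gap_integral_def insert_commute[of 2 3]
    by (intro nn_integral_cong) (auto simp: excess_def zero_ext_nth indicator_def)
  also have "\<dots> = (\<integral>\<^sup>+y. indicator {0..} (y 4) * (indicator {0..} (y 2)
      * ennreal ((1 - (y 2 + y 4)^2) / 2)) \<partial>PiM (insert 2 {4::4}) (\<lambda>_. lborel))"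
  proof (rule nn_integral_PiM_insert_lborel, goal_cases)
    case 3
    show ?case by measurable
  next
    case (4 y)
    show ?case
      by (simp, intro nn_integral_indicator_nonneg_cmult) (simp add: nn_integral_nonneg_one_minus_max)
  qed auto
  also have "\<dots> = (\<integral>\<^sup>+y. indicator {0..} (y 4)
      * ennreal (if y 4 \<le> 1 then (1 - y 4)^2 * (2 + y 4) / 6 else 0) \<partial>PiM {4::4} (\<lambda>_. lborel))"
  proof (rule nn_integral_PiM_insert_lborel, goal_cases)
    case 3
    show ?case by measurable
  next
    case (4 y)
    show ?case
      by (simp split del: if_split, intro nn_integral_indicator_nonneg_cmult)
        (simp add: nn_integral_nonneg_one_minus_add_square)
  qed auto
  also have "\<dots> = (\<integral>\<^sup>+t. indicator {0..} t
      * ennreal (if t \<le> 1 then (1 - t)^2 * (2 + t) / 6 else 0) \<partial>lborel)"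
    by (rule nn_integral_PiM_singleton_lborel[of
          "\<lambda>t. indicator {0..} t * ennreal (if t \<le> 1 then (1 - t)^2 * (2 + t) / 6 else 0)"])
      simp
  also have "\<dots> = ennreal (1/8)"
    by (rule nn_integral_nonneg_cubic)
  finally show ?thesis .
qed

lemma measure_coord_region_gap:
  "1 \<notin> J \<Longrightarrow> measure (PiM J (\<lambda>_. lborel)) (coord_region J in_gap) = 0"
  "measure (PiM {1} (\<lambda>_. lborel)) (coord_region {1} in_gap) = 1"
  "measure (PiM {1, 2} (\<lambda>_. lborel)) (coord_region {1, 2} in_gap) = 1/2"
  "measure (PiM {1, 3} (\<lambda>_. lborel)) (coord_region {1, 3} in_gap) = 1/2"
  "measure (PiM {1, 4} (\<lambda>_. lborel)) (coord_region {1, 4} in_gap) = 1/2"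
  "measure (PiM {1, 2, 3} (\<lambda>_. lborel)) (coord_region {1, 2, 3} in_gap) = 1/3"
  "measure (PiM {1, 3, 4} (\<lambda>_. lborel)) (coord_region {1, 3, 4} in_gap) = 1/3"
  "measure (PiM {1, 2, 4} (\<lambda>_. lborel)) (coord_region {1, 2, 4} in_gap) = 1/6"
  "measure (PiM {1, 2, 3, 4} (\<lambda>_. lborel)) (coord_region {1, 2, 3, 4::4} in_gap) = 1/8"
proof -
  show "1 \<notin> J \<Longrightarrow> measure (PiM J (\<lambda>_. lborel)) (coord_region J in_gap) = 0"
    by (simp add: coord_region_gap_empty)
  show "measure (PiM {1} (\<lambda>_. lborel)) (coord_region {1} in_gap) = 1"
    using measure_coord_region_insert_gap[of "{}" 1] gap_integral_empty by simp
  show "measure (PiM {1, 2} (\<lambda>_. lborel)) (coord_region {1, 2} in_gap) = 1/2"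
    "measure (PiM {1, 3} (\<lambda>_. lborel)) (coord_region {1, 3} in_gap) = 1/2"
    "measure (PiM {1, 4} (\<lambda>_. lborel)) (coord_region {1, 4} in_gap) = 1/2"
    by (rule measure_coord_region_insert_gap[OF _ gap_integral_singleton]; simp)+
  have "{1, 2, 3} = insert (1::4) {3, 2}" by auto
  moreover have "measure (PiM (insert 1 {3, 2}) (\<lambda>_. lborel)) (coord_region (insert 1 {3, 2}) in_gap)
      = 1/3"
    by (rule measure_coord_region_insert_gap[OF _ gap_integral_3_and]) auto
  ultimately show "measure (PiM {1, 2, 3} (\<lambda>_. lborel)) (coord_region {1, 2, 3} in_gap) = 1/3"
    by (simp only:)
  show "measure (PiM {1, 3, 4} (\<lambda>_. lborel)) (coord_region {1, 3, 4} in_gap) = 1/3"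
    by (rule measure_coord_region_insert_gap[OF _ gap_integral_3_and]) auto
  show "measure (PiM {1, 2, 4} (\<lambda>_. lborel)) (coord_region {1, 2, 4} in_gap) = 1/6"
    by (rule measure_coord_region_insert_gap[OF _ gap_integral_2_4]) auto
  show "measure (PiM {1, 2, 3, 4} (\<lambda>_. lborel)) (coord_region {1, 2, 3, 4::4} in_gap) = 1/8"
    by (rule measure_coord_region_insert_gap[OF _ gap_integral_2_3_4]) auto
qed

lemma sum_Pow_insert:
  assumes "finite A" "a \<notin> A"
  shows "sum f (Pow (insert a A)) = sum f (Pow A) + sum (\<lambda>B. f (insert a B)) (Pow A)"
proof -
  have "inj_on (insert a) (Pow A)"
    using assms(2) unfolding inj_on_def by (metis PowD insert_ident subsetD)
  moreover have "Pow A \<inter> insert a ` Pow A = {}" using assms(2) by auto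
  ultimately show ?thesis
    using assms(1) by (simp add: Pow_insert sum.union_disjoint sum.reindex)
qed

theorem newton_number_Gamma_F_eq_Gamma_G: "newton_number Gamma_F = newton_number Gamma_G"
proof -
  define c :: "4 set \<Rightarrow> real" where "c J = (-1) ^ (CARD(4) - card J) * fact (card J)" for J
  define f where "f J = c J * measure (PiM J (\<lambda>_. lborel)) (coord_region J in_gap)" for J
  have "newton_number Gamma_F - newton_number Gamma_G
      = (\<Sum>J\<in>{J. J \<noteq> {}}. c J * (vol_compl J Gamma_F - vol_compl J Gamma_G))"
    by (simp add: newton_number_def c_def right_diff_distrib flip: sum_subtractf)
  also have "\<dots> = (\<Sum>J\<in>{J. J \<noteq> {}}. f J)"
    by (simp add: vol_compl_Gamma_F_minus_Gamma_G f_def)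
  also have "{J :: 4 set. J \<noteq> {}} = Pow {1, 2, 3, 4} - {{}}"
    by (auto simp flip: UNIV_4)
  also have "(\<Sum>J\<in>Pow {1, 2, 3, 4} - {{}}. f J) = (\<Sum>J\<in>Pow {1, 2, 3, 4}. f J) - f {}"
    by (simp add: sum_diff1)
  also have "\<dots> = 0"
    by (simp add: sum_Pow_insert f_def c_def measure_coord_region_gap)
  finally show ?thesis by simp
qed

theorem mainTheorem18:
  fixes SF SG :: "(real^4) set"
  defines "SF \<equiv> {vector [10,0,0,0], vector [0,10,0,0], vector [0,0,10,0], vector [0,0,0,10],
                  vector [5,1,0,0], vector [5,0,1,0], vector [5,0,0,1],
                  vector [0,1,1,0], vector [0,0,1,1]}"
  defines "SG \<equiv> insert (vector [9,0,0,0]) SF"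
  shows "newton_polyhedron SF \<subset> newton_polyhedron SG \<and>
         newton_number (newton_polyhedron SF) = newton_number (newton_polyhedron SG)"
  unfolding SG_def SF_def using Gamma_F_psubset_Gamma_G newton_number_Gamma_F_eq_Gamma_G by simp

end
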